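(* Let $0<\epsilon<1$ and $\mathcal Q=[1/\epsilon]$. Let $0<\alpha<1$ be irrational and let $\gamma=p/q<\gamma'=p'/q'$ be the two consecutive elements of $\mathcal F_{\mathcal Q}$ with $\gamma<\alpha<\gamma'$. Then: (i) if $\frac pq<\alpha<\frac{p'-\epsilon}{q'}$, then $q_{N(\alpha,\epsilon)}(\alpha)=q$ and $d_{N(\alpha,\epsilon)}(\alpha)=q\alpha-p$; (ii) if $\frac{p'-\epsilon}{q'}\le\alpha\le\frac{p+\epsilon}{q}$, then $q_{N(\alpha,\epsilon)}(\alpha)=\min(q,q')$, and $d_{N(\alpha,\epsilon)}(\alpha)=q\alpha-p$ if $q<q'$, $d_{N(\alpha,\epsilon)}(\alpha)=p'-q'\alpha$ if $q'<q$; (iii) if $\frac{p+\epsilon}{q}<\alpha<\frac{p'}{q'}$, then $q_{N(\alpha,\epsilon)}(\alpha)=q'$ and $d_{N(\alpha,\epsilon)}(\alpha)=p'-q'\alpha$.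
   Context: $\mathcal F_{\mathcal Q}=\{p/q:1\le p\le q\le\mathcal Q,\ \gcd(p,q)=1\}$ is the set of Farey fractions of order $\le\mathcal Q$. For irrational $\alpha\in(0,1)$ with continued fraction partial quotients $a_1,a_2,\dots$ (i.e. $a_n=[1/T^{n-1}\alpha]$, $T(x)=1/x-[1/x]$), define $p_0=1,p_1=0$, $q_0=0,q_1=1$, $p_{n+1}=a_np_n+p_{n-1}$, $q_{n+1}=a_nq_n+q_{n-1}$, $d_n(\alpha)=|q_n\alpha-p_n|$, and $N(\alpha,\epsilon)=\inf\{n\ge0:d_n(\alpha)\le\epsilon\}$. *)

theory Defs
  imports Complex_Main
begin

definition farey :: "nat \<Rightarrow> real set" where
  "farey Q = {real p / real q | p q. 1 \<le> p \<and> p \<le> q \<and> q \<le> Q \<and> coprime p q}"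

definition gauss :: "real \<Rightarrow> real" where
  "gauss x = 1 / x - of_int \<lfloor>1 / x\<rfloor>"

definition cf_a :: "real \<Rightarrow> nat \<Rightarrow> nat" where
  "cf_a \<alpha> n = nat \<lfloor>1 / (gauss ^^ (n - 1)) \<alpha>\<rfloor>"

fun cf_p :: "real \<Rightarrow> nat \<Rightarrow> nat" where
  "cf_p \<alpha> 0 = 1"
| "cf_p \<alpha> (Suc 0) = 0"
| "cf_p \<alpha> (Suc (Suc n)) = cf_a \<alpha> (Suc n) * cf_p \<alpha> (Suc n) + cf_p \<alpha> n"

fun cf_q :: "real \<Rightarrow> nat \<Rightarrow> nat" where
  "cf_q \<alpha> 0 = 0"
| "cf_q \<alpha> (Suc 0) = 1"
| "cf_q \<alpha> (Suc (Suc n)) = cf_a \<alpha> (Suc n) * cf_q \<alpha> (Suc n) + cf_q \<alpha> n"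

definition cf_d :: "real \<Rightarrow> nat \<Rightarrow> real" where
  "cf_d \<alpha> n = \<bar>real (cf_q \<alpha> n) * \<alpha> - real (cf_p \<alpha> n)\<bar>"

definition cf_N :: "real \<Rightarrow> real \<Rightarrow> nat" where
  "cf_N \<alpha> \<epsilon> = (LEAST n. cf_d \<alpha> n \<le> \<epsilon>)"

end

theory Submission
  imports Defs
begin

text \<open>
  Write delta_n = q_n alpha - p_n. Then delta_(n+1) = - T^n(alpha) delta_n, so consecutive
  errors have opposite signs and the determinant identity p_(n+1) q_n - p_n q_(n+1) = +-1
  becomes q_(n+1) d_n + q_n d_(n+1) = 1. Hence d_n < 1/q_(n+1), which forces q_N <= 1/eps,
  i.e. q_N <= Q. Expanding (m, k) in the basis of two consecutive convergents gives Lagrange's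
  best approximation property: q_N is the least m >= 1 with |m alpha - k| <= eps for some k.

  If m <= Q and |m alpha - k| <= eps <= 1/Q, then k/m is a Farey fraction of order Q, so it
  is not strictly between p/q and p'/q'; were it strictly below p/q, then
  |m alpha - k| > |m p/q - k| >= 1/q >= 1/Q, and likewise above p'/q'. So p_N/q_N is p/q or
  p'/q', minimality of q_N makes it reduced, and which of the two occurs is decided by
  comparing q alpha - p and p' - q' alpha with eps.
\<close>

section \<open>Integer lattices and signs\<close>

lemma unimodular_coordinates:
  fixes P0 Q0 P1 Q1 m k :: int
  assumes "\<bar>P1 * Q0 - P0 * Q1\<bar> = 1"
  obtains s t where "m = s * Q0 + t * Q1" "k = s * P0 + t * P1"
proof
  define e where "e = P1 * Q0 - P0 * Q1"
  have "e * e = 1"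
    using assms abs_mult_self_eq[of e] by (simp add: e_def)
  then show "m = (e * (P1 * m - Q1 * k)) * Q0 + (e * (Q0 * k - P0 * m)) * Q1"
    and "k = (e * (P1 * m - Q1 * k)) * P0 + (e * (Q0 * k - P0 * m)) * P1"
    unfolding e_def by algebra+
qed

lemma abs_add_eq_of_mult_nonneg:
  fixes u v :: real
  assumes "0 \<le> u * v"
  shows "\<bar>u + v\<bar> = \<bar>u\<bar> + \<bar>v\<bar>"
  using assms by (auto simp: zero_le_mult_iff)

lemma abs_mult_diff_of_opposite_signs:
  fixes a b x y :: real
  assumes "a * b \<le> 0" "0 \<le> x" "0 \<le> y"
  shows "\<bar>x * a - y * b\<bar> = x * \<bar>a\<bar> + y * \<bar>b\<bar>"
proof -
  have "0 \<le> (x * a) * (- (y * b))"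
    using assms mult_nonneg_nonpos[of "x * y" "a * b"] by (simp add: algebra_simps)
  then have "\<bar>x * a + - (y * b)\<bar> = \<bar>x * a\<bar> + \<bar>- (y * b)\<bar>"
    by (rule abs_add_eq_of_mult_nonneg)
  then show ?thesis
    using assms by (simp add: abs_mult)
qed

lemma coefficients_opposite_signs:
  fixes s t a b m :: int
  assumes "0 \<le> a" "0 < m" "m < b" "m = s * a + t * b"
  shows "s \<noteq> 0" "s * t \<le> 0"
proof -
  have "0 < b" using assms by linarith
  then have tb: "t * b \<le> 0 \<or> b \<le> t * b"
    using mult_right_mono[of 1 t b] mult_nonpos_nonneg[of t b] by (cases "t \<le> 0") auto
  show "s \<noteq> 0"
  proof
    assume "s = 0"
    then show False using tb assms by (elim disjE) simp_all
  qed
  show "s * t \<le> 0"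
  proof (rule ccontr)
    assume "\<not> s * t \<le> 0"
    then consider "0 < s" "0 < t" | "s < 0" "t < 0"
      by (metis not_le zero_less_mult_iff)
    then show False
    proof cases
      case 1
      then have "b \<le> t * b" "0 \<le> s * a"
        using \<open>0 < b\<close> \<open>0 \<le> a\<close> mult_right_mono[of 1 t b] by simp_all
      then show False using assms by linarith
    next
      case 2
      then show False using assms mult_nonpos_nonneg[of s a] mult_nonpos_nonneg[of t b] by simp
    qed
  qed
qed

section \<open>Farey fractions\<close>

lemma farey_memI:
  assumes "1 \<le> k" "k \<le> m" "m \<le> Q"
  shows "real k / real m \<in> farey Q"
proof -
  obtain k' m' where k: "k = k' * gcd k m" and m: "m = m' * gcd k m" and "coprime k' m'"
    using gcd_coprime_exists[of k m] assms(1) by auto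
  have "0 < gcd k m"
    using assms(1) by simp
  have "1 \<le> k'"
    using assms(1) k by (metis less_one mult_zero_left not_le)
  moreover have "k' \<le> m'"
    using assms(2) k m \<open>0 < gcd k m\<close> by (metis mult_le_cancel2)
  moreover have "m' \<le> m"
    using m mult_le_mono2[of 1 "gcd k m" m'] \<open>0 < gcd k m\<close> by simp
  moreover have "real k / real m = real k' / real m'"
    using k m \<open>0 < gcd k m\<close> by (metis of_nat_mult mult_divide_mult_cancel_right of_nat_eq_0_iff less_irrefl)
  ultimately show ?thesis
    unfolding farey_def using assms(3) \<open>coprime k' m'\<close> by fastforce
qed

lemma fraction_le_iff_cross_le:
  fixes k m p q :: nat
  assumes "0 < m" "0 < q"
  shows "real k / real m \<le> real p / real q \<longleftrightarrow> k * q \<le> p * m"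
  using assms by (simp add: field_simps flip: of_nat_mult)

lemma approx_error_gt_inverse_denom:
  fixes k p :: int and m q :: nat
  assumes "0 < m" "0 < q" "k * q < p * m" "of_int p / real q < \<alpha>"
  shows "1 / real q < real m * \<alpha> - of_int k"
proof -
  have "(1::real) \<le> of_int (p * int m - k * int q)"
    using assms(3) by linarith
  then have gap: "1 / real q \<le> (of_int p * real m - of_int k * real q) / real q"
    using assms(2) by (simp add: divide_right_mono)
  have "real m * \<alpha> - of_int k = real m * (\<alpha> - of_int p / real q) + (of_int p * real m - of_int k * real q) / real q"
    using assms(2) by (simp add: diff_divide_distrib right_diff_distrib)
  moreover have "0 < real m * (\<alpha> - of_int p / real q)"
    using assms(1,4) by simp
  ultimately show ?thesis
    using gap by linarith
qed

lemma close_approx_is_farey_neighbour: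
  fixes \<alpha> \<epsilon> :: real and p q p' q' Q m k :: nat
  assumes "0 < \<alpha>" "\<alpha> < 1" "\<epsilon> \<le> 1 / real Q"
    and "1 \<le> p" "p \<le> q" "q \<le> Q" "1 \<le> p'" "p' \<le> q'" "q' \<le> Q"
    and lower: "real p / real q < \<alpha>" and upper: "\<alpha> < real p' / real q'"
    and neighbours: "\<not> (\<exists>x\<in>farey Q. real p / real q < x \<and> x < real p' / real q')"
    and "1 \<le> m" "m \<le> Q" and close: "\<bar>real m * \<alpha> - real k\<bar> \<le> \<epsilon>"
  shows "k * q = p * m \<or> k * q' = p' * m"
proof -
  have "0 < q" "0 < q'" "0 < m"
    using assms by auto
  have eps_q: "\<epsilon> \<le> 1 / real q" and eps_q': "\<epsilon> \<le> 1 / real q'"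
    using assms(3) \<open>q \<le> Q\<close> \<open>q' \<le> Q\<close> \<open>0 < q\<close> \<open>0 < q'\<close>
      frac_le[of 1 1 "real q" "real Q"] frac_le[of 1 1 "real q'" "real Q"] by simp_all
  have "1 / real q \<le> 1"
    using assms(4,5) by simp
  then have "\<epsilon> \<le> 1"
    using eps_q by linarith
  have "k \<noteq> 0"
  proof
    assume "k = 0"
    then have "real m * \<alpha> \<le> \<epsilon>"
      using close assms(1) by simp
    moreover have "\<alpha> \<le> real m * \<alpha>"
      using \<open>1 \<le> m\<close> assms(1) by simp
    moreover have "1 / real q \<le> real p / real q"
      using \<open>1 \<le> p\<close> by (simp add: divide_right_mono)
    ultimately show False
      using lower eps_q by linarith
  qed
  have "k \<le> m"
  proof (rule ccontr)
    assume "\<not> k \<le> m"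
    then have "real m + 1 \<le> real k"
      by simp
    moreover have "real m * \<alpha> < real m"
      using assms(2) \<open>0 < m\<close> by simp
    ultimately show False
      using close \<open>\<epsilon> \<le> 1\<close> by linarith
  qed
  then have "real k / real m \<in> farey Q"
    using farey_memI \<open>k \<noteq> 0\<close> \<open>m \<le> Q\<close> by simp
  then have "real k / real m \<le> real p / real q \<or> real p' / real q' \<le> real k / real m"
    using neighbours by force
  then have "k * q \<le> p * m \<or> p' * m \<le> k * q'"
    using fraction_le_iff_cross_le \<open>0 < m\<close> \<open>0 < q\<close> \<open>0 < q'\<close> by metis
  moreover have "\<not> k * q < p * m"
  proof
    assume "k * q < p * m"
    then have "1 / real q < real m * \<alpha> - real k"
      using approx_error_gt_inverse_denom[of m q "int k" "int p" \<alpha>] \<open>0 < m\<close> \<open>0 < q\<close> lower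
      by (simp flip: of_nat_mult)
    then show False
      using close eps_q by linarith
  qed
  moreover have "\<not> p' * m < k * q'"
  proof
    assume "p' * m < k * q'"
    \<comment> \<open>the mirror image of the previous case under \<open>\<alpha> \<mapsto> -\<alpha>\<close>\<close>
    then have "1 / real q' < real m * (- \<alpha>) - of_int (- int k)"
      using approx_error_gt_inverse_denom[of m q' "- int k" "- int p'" "- \<alpha>"] \<open>0 < m\<close> \<open>0 < q'\<close> upper
      by (simp flip: of_nat_mult)
    then show False
      using close eps_q' by linarith
  qed
  ultimately show ?thesis
    by linarith
qed

section \<open>Convergents of an irrational number\<close>

lemma gauss_irrational_unit:
  assumes "0 < x" "x < 1" "x \<notin> \<rat>"
  shows "0 < gauss x" "gauss x < 1" "gauss x \<notin> \<rat>"
proof -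
  have inv_irrational: "1 / x \<notin> \<rat>"
    using assms(3) Rats_divide[OF Rats_1, of "1 / x"] by auto
  then have "of_int \<lfloor>1 / x\<rfloor> \<noteq> 1 / x"
    by (metis Rats_of_int)
  then show "0 < gauss x" "gauss x < 1"
    unfolding gauss_def using of_int_floor_le[of "1 / x"] by linarith+
  show "gauss x \<notin> \<rat>"
    using inv_irrational Rats_add[OF _ Rats_of_int, of "gauss x" "\<lfloor>1 / x\<rfloor>"]
    by (auto simp: gauss_def)
qed

definition cf_delta :: "real \<Rightarrow> nat \<Rightarrow> real" where
  "cf_delta \<alpha> n = real (cf_q \<alpha> n) * \<alpha> - real (cf_p \<alpha> n)"

lemma cf_d_eq_abs_delta: "cf_d \<alpha> n = \<bar>cf_delta \<alpha> n\<bar>"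
  by (simp add: cf_d_def cf_delta_def)

lemma cf_delta_Suc_Suc:
  "cf_delta \<alpha> (Suc (Suc n)) = real (cf_a \<alpha> (Suc n)) * cf_delta \<alpha> (Suc n) + cf_delta \<alpha> n"
  by (simp add: cf_delta_def algebra_simps)

lemma cf_det:
  "int (cf_p \<alpha> (Suc n)) * int (cf_q \<alpha> n) - int (cf_p \<alpha> n) * int (cf_q \<alpha> (Suc n)) = (-1) ^ Suc n"
  by (induction n) (simp_all add: algebra_simps)

locale irrational_unit =
  fixes \<alpha> :: real
  assumes pos: "0 < \<alpha>" and less_one: "\<alpha> < 1" and irrational: "\<alpha> \<notin> \<rat>"
begin

lemma gauss_iter_bounds:
  "0 < (gauss ^^ n) \<alpha>" "(gauss ^^ n) \<alpha> < 1" "(gauss ^^ n) \<alpha> \<notin> \<rat>"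
  by (induction n) (use pos less_one irrational gauss_irrational_unit in auto)

lemma of_nat_cf_a_Suc: "real (cf_a \<alpha> (Suc n)) = of_int \<lfloor>1 / (gauss ^^ n) \<alpha>\<rfloor>"
  and cf_a_Suc_ge_1: "1 \<le> cf_a \<alpha> (Suc n)"
proof -
  have "1 < 1 / (gauss ^^ n) \<alpha>"
    using gauss_iter_bounds(1,2) by simp
  then have "1 \<le> \<lfloor>1 / (gauss ^^ n) \<alpha>\<rfloor>"
    by linarith
  moreover have "cf_a \<alpha> (Suc n) = nat \<lfloor>1 / (gauss ^^ n) \<alpha>\<rfloor>"
    by (simp add: cf_a_def)
  ultimately show "real (cf_a \<alpha> (Suc n)) = of_int \<lfloor>1 / (gauss ^^ n) \<alpha>\<rfloor>" "1 \<le> cf_a \<alpha> (Suc n)"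
    by linarith+
qed

lemma gauss_iter_Suc: "(gauss ^^ Suc n) \<alpha> = 1 / (gauss ^^ n) \<alpha> - real (cf_a \<alpha> (Suc n))"
  by (simp add: gauss_def of_nat_cf_a_Suc)

lemma cf_delta_Suc: "cf_delta \<alpha> (Suc n) = - (gauss ^^ n) \<alpha> * cf_delta \<alpha> n"
proof (induction n)
  case 0
  then show ?case by (simp add: cf_delta_def)
next
  case (Suc n)
  have "(gauss ^^ n) \<alpha> \<noteq> 0"
    using gauss_iter_bounds(1) by (metis less_irrefl)
  then have "cf_delta \<alpha> n = - cf_delta \<alpha> (Suc n) / (gauss ^^ n) \<alpha>"
    using Suc.IH by (simp add: field_simps)
  then show ?case
    unfolding cf_delta_Suc_Suc gauss_iter_Suc by (simp add: algebra_simps)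
qed

lemma cf_delta_nonzero: "cf_delta \<alpha> n \<noteq> 0"
proof (induction n)
  case 0
  then show ?case by (simp add: cf_delta_def)
next
  case (Suc n)
  then show ?case
    using gauss_iter_bounds(1)[of n] by (auto simp: cf_delta_Suc)
qed

lemma cf_delta_mult_Suc_neg: "cf_delta \<alpha> n * cf_delta \<alpha> (Suc n) < 0"
proof -
  have "cf_delta \<alpha> n * cf_delta \<alpha> (Suc n) = - ((gauss ^^ n) \<alpha> * (cf_delta \<alpha> n)\<^sup>2)"
    by (simp add: cf_delta_Suc power2_eq_square)
  then show ?thesis
    using gauss_iter_bounds(1)[of n] cf_delta_nonzero[of n] by simp
qed

lemma cf_q_d_cross_sum_eq_1: "real (cf_q \<alpha> (Suc n)) * cf_d \<alpha> n + real (cf_q \<alpha> n) * cf_d \<alpha> (Suc n) = 1"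
proof -
  have "real (cf_q \<alpha> (Suc n)) * cf_delta \<alpha> n - real (cf_q \<alpha> n) * cf_delta \<alpha> (Suc n) = (-1) ^ Suc n"
    using arg_cong[OF cf_det[of \<alpha> n], of real_of_int] by (simp add: cf_delta_def algebra_simps)
  then have "\<bar>real (cf_q \<alpha> (Suc n)) * cf_delta \<alpha> n - real (cf_q \<alpha> n) * cf_delta \<alpha> (Suc n)\<bar> = 1"
    by simp
  then show ?thesis
    using abs_mult_diff_of_opposite_signs[of "cf_delta \<alpha> n" "cf_delta \<alpha> (Suc n)"] cf_delta_mult_Suc_neg[of n]
    by (simp add: cf_d_eq_abs_delta)
qed

lemma cf_q_Suc_Suc_ge: "cf_q \<alpha> (Suc n) + cf_q \<alpha> n \<le> cf_q \<alpha> (Suc (Suc n))"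
proof -
  have "cf_q \<alpha> (Suc n) \<le> cf_a \<alpha> (Suc n) * cf_q \<alpha> (Suc n)"
    using mult_le_mono1[OF cf_a_Suc_ge_1[of n]] by simp
  then show ?thesis
    by simp
qed

lemma cf_q_le_Suc: "cf_q \<alpha> n \<le> cf_q \<alpha> (Suc n)"
proof (cases n)
  case (Suc m)
  show ?thesis
    unfolding Suc using cf_q_Suc_Suc_ge[of m] by linarith
qed simp

lemma incseq_cf_q: "incseq (cf_q \<alpha>)"
  using cf_q_le_Suc by (rule incseq_SucI)

lemma cf_q_ge_1: "1 \<le> n \<Longrightarrow> 1 \<le> cf_q \<alpha> n"
  using incseqD[OF incseq_cf_q, of 1 n] by simp

lemma cf_q_Suc_ge: "n \<le> cf_q \<alpha> (Suc n)"
proof (induction n)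
  case (Suc n)
  have "n = 0 \<or> 1 \<le> cf_q \<alpha> n"
    using cf_q_ge_1[of n] by linarith
  then show ?case
    using Suc.IH cf_q_Suc_Suc_ge[of n] by (auto simp del: cf_q.simps(3))
qed simp

lemma cf_d_le_abs_approx:
  assumes "1 \<le> m" "m < cf_q \<alpha> (Suc n)"
  shows "cf_d \<alpha> n \<le> \<bar>real m * \<alpha> - of_int k\<bar>"
proof -
  have "\<bar>int (cf_p \<alpha> (Suc n)) * int (cf_q \<alpha> n) - int (cf_p \<alpha> n) * int (cf_q \<alpha> (Suc n))\<bar> = 1"
    using cf_det[of \<alpha> n] by simp
  then obtain s t where m: "int m = s * int (cf_q \<alpha> n) + t * int (cf_q \<alpha> (Suc n))"
    and k: "k = s * int (cf_p \<alpha> n) + t * int (cf_p \<alpha> (Suc n))"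
    by (rule unimodular_coordinates)
  have "s \<noteq> 0" "s * t \<le> 0"
    using coefficients_opposite_signs[OF _ _ _ m] assms by simp_all
  have approx: "real m * \<alpha> - of_int k = of_int s * cf_delta \<alpha> n + of_int t * cf_delta \<alpha> (Suc n)"
    using arg_cong[OF m, of real_of_int] arg_cong[OF k, of real_of_int]
    by (simp add: cf_delta_def algebra_simps)
  have "(of_int s * cf_delta \<alpha> n) * (of_int t * cf_delta \<alpha> (Suc n))
      = of_int (s * t) * (cf_delta \<alpha> n * cf_delta \<alpha> (Suc n))"
    by (simp add: algebra_simps)
  also have "\<dots> \<ge> 0"
    by (rule mult_nonpos_nonpos) (use \<open>s * t \<le> 0\<close> cf_delta_mult_Suc_neg[of n] in \<open>simp_all flip: of_int_mult\<close>)
  finally have "\<bar>of_int s * cf_delta \<alpha> n\<bar> \<le> \<bar>real m * \<alpha> - of_int k\<bar>"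
    unfolding approx by (simp add: abs_add_eq_of_mult_nonneg)
  moreover have "\<bar>cf_delta \<alpha> n\<bar> \<le> \<bar>of_int s * cf_delta \<alpha> n\<bar>"
  proof -
    have "1 \<le> \<bar>real_of_int s\<bar>"
      using \<open>s \<noteq> 0\<close> by linarith
    then show ?thesis
      by (simp add: abs_mult mult_le_cancel_right1)
  qed
  ultimately show ?thesis
    by (simp add: cf_d_eq_abs_delta)
qed

lemma exists_cf_d_le:
  assumes "0 < \<epsilon>"
  obtains n where "cf_d \<alpha> n \<le> \<epsilon>" "real (cf_q \<alpha> n) \<le> 1 / \<epsilon>"
proof -
  obtain j where "1 / \<epsilon> < real j"
    using reals_Archimedean2 by blast
  then have "1 / \<epsilon> < real (cf_q \<alpha> (Suc j))"
    using cf_q_Suc_ge[of j] by (meson of_nat_le_iff order_less_le_trans)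
  moreover have "\<not> 1 / \<epsilon> < real (cf_q \<alpha> 0)"
    using assms by simp
  ultimately obtain n where below: "\<not> 1 / \<epsilon> < real (cf_q \<alpha> n)"
    and above: "1 / \<epsilon> < real (cf_q \<alpha> (Suc n))"
    using ex_least_nat_less[of "\<lambda>i. 1 / \<epsilon> < real (cf_q \<alpha> i)"] by blast
  have "real (cf_q \<alpha> (Suc n)) * cf_d \<alpha> n \<le> 1"
  proof -
    have "0 \<le> real (cf_q \<alpha> n) * cf_d \<alpha> (Suc n)"
      by (simp add: cf_d_def)
    then show ?thesis
      using cf_q_d_cross_sum_eq_1[of n] by linarith
  qed
  moreover have q_pos: "0 < real (cf_q \<alpha> (Suc n))"
    using above assms by (meson divide_pos_pos less_trans zero_less_one)
  ultimately have "cf_d \<alpha> n \<le> 1 / real (cf_q \<alpha> (Suc n))"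
    by (simp add: pos_le_divide_eq mult.commute)
  also have "\<dots> < \<epsilon>"
    using above assms q_pos by (simp add: field_simps)
  finally show ?thesis
    using below that[of n] by simp
qed

lemma cf_d_cf_N_le: "0 < \<epsilon> \<Longrightarrow> cf_d \<alpha> (cf_N \<alpha> \<epsilon>) \<le> \<epsilon>"
  unfolding cf_N_def by (metis exists_cf_d_le LeastI)

lemma cf_q_cf_N_le_inverse: "0 < \<epsilon> \<Longrightarrow> real (cf_q \<alpha> (cf_N \<alpha> \<epsilon>)) \<le> 1 / \<epsilon>"
  unfolding cf_N_def by (metis exists_cf_d_le Least_le incseqD[OF incseq_cf_q] of_nat_le_iff order_trans)

lemma cf_q_cf_N_le:
  assumes "1 \<le> m" "\<bar>real m * \<alpha> - of_int k\<bar> \<le> \<epsilon>"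
  shows "cf_q \<alpha> (cf_N \<alpha> \<epsilon>) \<le> m"
proof (rule ccontr)
  assume "\<not> cf_q \<alpha> (cf_N \<alpha> \<epsilon>) \<le> m"
  moreover obtain M where M: "cf_N \<alpha> \<epsilon> = Suc M"
    using calculation by (metis cf_q.simps(1) le0 not0_implies_Suc)
  moreover have "\<not> cf_d \<alpha> M \<le> \<epsilon>"
    using not_less_Least[of M "\<lambda>n. cf_d \<alpha> n \<le> \<epsilon>"] M by (simp add: cf_N_def)
  ultimately show False
    using cf_d_le_abs_approx[OF assms(1), of M k] assms(2) by simp
qed

lemma cf_N_pos:
  assumes "0 < \<epsilon>" "\<epsilon> < 1"
  shows "0 < cf_N \<alpha> \<epsilon>"
proof -
  have "cf_d \<alpha> 0 = 1"
    by (simp add: cf_d_def)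
  then show ?thesis
    using cf_d_cf_N_le[OF assms(1)] assms(2) by (metis gr0I not_le)
qed

lemma cf_N_eq_of_proportional:
  fixes p q :: nat
  assumes "0 < \<epsilon>" "coprime p q" "0 < cf_q \<alpha> (cf_N \<alpha> \<epsilon>)"
    and proportional: "cf_p \<alpha> (cf_N \<alpha> \<epsilon>) * q = p * cf_q \<alpha> (cf_N \<alpha> \<epsilon>)"
  shows "cf_q \<alpha> (cf_N \<alpha> \<epsilon>) = q \<and> cf_p \<alpha> (cf_N \<alpha> \<epsilon>) = p"
proof -
  define N where "N = cf_N \<alpha> \<epsilon>"
  have "q dvd cf_q \<alpha> N"
    using proportional \<open>coprime p q\<close> coprime_dvd_mult_right_iff[of q p]
    by (metis N_def coprime_commute dvd_triv_right)
  then obtain c where qN: "cf_q \<alpha> N = q * c"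
    by blast
  then have "0 < q" "1 \<le> c"
    using \<open>0 < cf_q \<alpha> (cf_N \<alpha> \<epsilon>)\<close> by (auto simp: N_def)
  moreover from this have pN: "cf_p \<alpha> N = p * c"
    using proportional qN by (simp add: N_def)
  have "real (q * c) * \<alpha> - real (p * c) = real c * (real q * \<alpha> - real p)"
    by (simp add: algebra_simps)
  then have "real c * \<bar>real q * \<alpha> - real p\<bar> = cf_d \<alpha> N"
    by (simp add: cf_d_def qN pN abs_mult)
  then have "real c * \<bar>real q * \<alpha> - real p\<bar> \<le> \<epsilon>"
    using cf_d_cf_N_le[OF assms(1)] by (simp add: N_def)
  moreover have "\<bar>real q * \<alpha> - real p\<bar> \<le> real c * \<bar>real q * \<alpha> - real p\<bar>"
    using \<open>1 \<le> c\<close> mult_right_mono[of 1 "real c" "\<bar>real q * \<alpha> - real p\<bar>"] by simp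
  ultimately have "cf_q \<alpha> N \<le> q"
    using cf_q_cf_N_le[of q "int p" \<epsilon>] \<open>0 < q\<close> by (simp add: N_def)
  then have "c = 1"
    using qN \<open>0 < q\<close> \<open>1 \<le> c\<close> by simp
  then show ?thesis
    using qN pN by (simp add: N_def)
qed

lemma cf_N_at_farey_neighbour:
  fixes p q p' q' Q :: nat
  assumes "0 < \<epsilon>" "\<epsilon> < 1" "Q = nat \<lfloor>1 / \<epsilon>\<rfloor>"
    and "1 \<le> p" "p \<le> q" "q \<le> Q" "coprime p q"
    and "1 \<le> p'" "p' \<le> q'" "q' \<le> Q" "coprime p' q'"
    and "real p / real q < \<alpha>" "\<alpha> < real p' / real q'"
    and "\<not> (\<exists>x\<in>farey Q. real p / real q < x \<and> x < real p' / real q')"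
  shows "cf_q \<alpha> (cf_N \<alpha> \<epsilon>) = q \<and> cf_p \<alpha> (cf_N \<alpha> \<epsilon>) = p
    \<or> cf_q \<alpha> (cf_N \<alpha> \<epsilon>) = q' \<and> cf_p \<alpha> (cf_N \<alpha> \<epsilon>) = p'"
proof -
  define N where "N = cf_N \<alpha> \<epsilon>"
  have "1 \<le> cf_q \<alpha> N"
    using cf_q_ge_1 cf_N_pos[OF assms(1,2)] by (simp add: N_def Suc_leI)
  moreover have "cf_q \<alpha> N \<le> Q"
    using cf_q_cf_N_le_inverse[OF assms(1)] le_nat_floor assms(3) by (simp add: N_def)
  moreover have "\<epsilon> \<le> 1 / real Q"
  proof -
    have "real Q \<le> 1 / \<epsilon>" "1 \<le> Q"
      using of_nat_floor[of "1 / \<epsilon>"] assms(1,3-6) by simp_all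
    then show ?thesis
      using assms(1) by (simp add: field_simps)
  qed
  moreover have "\<bar>real (cf_q \<alpha> N) * \<alpha> - real (cf_p \<alpha> N)\<bar> \<le> \<epsilon>"
    using cf_d_cf_N_le[OF assms(1)] by (simp add: N_def cf_d_def)
  ultimately have "cf_p \<alpha> N * q = p * cf_q \<alpha> N \<or> cf_p \<alpha> N * q' = p' * cf_q \<alpha> N"
    by (intro close_approx_is_farey_neighbour[OF pos less_one _ assms(4-6,8-10,12-14)])
  then show ?thesis
  proof
    assume "cf_p \<alpha> N * q = p * cf_q \<alpha> N"
    then show ?thesis
      using cf_N_eq_of_proportional[OF assms(1,7)] \<open>1 \<le> cf_q \<alpha> N\<close> by (simp add: N_def)
  next
    assume "cf_p \<alpha> N * q' = p' * cf_q \<alpha> N"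
    then show ?thesis
      using cf_N_eq_of_proportional[OF assms(1,11)] \<open>1 \<le> cf_q \<alpha> N\<close> by (simp add: N_def)
  qed
qed

end

theorem lemma5p1:
  fixes \<epsilon> \<alpha> :: real and p q p' q' Q :: nat
  assumes "0 < \<epsilon>" "\<epsilon> < 1"
    and "Q = nat \<lfloor>1 / \<epsilon>\<rfloor>"
    and "0 < \<alpha>" "\<alpha> < 1" "\<alpha> \<notin> \<rat>"
    and "1 \<le> p" "p \<le> q" "q \<le> Q" "coprime p q"
    and "1 \<le> p'" "p' \<le> q'" "q' \<le> Q" "coprime p' q'"
    and "real p / real q < \<alpha>" "\<alpha> < real p' / real q'"
    and "\<not> (\<exists>x\<in>farey Q. real p / real q < x \<and> x < real p' / real q')"
  shows
    "(\<alpha> < (real p' - \<epsilon>) / real q' \<longrightarrow>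
        cf_q \<alpha> (cf_N \<alpha> \<epsilon>) = q \<and> cf_d \<alpha> (cf_N \<alpha> \<epsilon>) = real q * \<alpha> - real p)
   \<and> ((real p' - \<epsilon>) / real q' \<le> \<alpha> \<and> \<alpha> \<le> (real p + \<epsilon>) / real q \<longrightarrow>
        cf_q \<alpha> (cf_N \<alpha> \<epsilon>) = min q q'
      \<and> (q < q' \<longrightarrow> cf_d \<alpha> (cf_N \<alpha> \<epsilon>) = real q * \<alpha> - real p)
      \<and> (q' < q \<longrightarrow> cf_d \<alpha> (cf_N \<alpha> \<epsilon>) = real p' - real q' * \<alpha>))
   \<and> ((real p + \<epsilon>) / real q < \<alpha> \<longrightarrow>
        cf_q \<alpha> (cf_N \<alpha> \<epsilon>) = q' \<and> cf_d \<alpha> (cf_N \<alpha> \<epsilon>) = real p' - real q' * \<alpha>)"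
proof -
  interpret irrational_unit \<alpha>
    using assms(4-6) by unfold_locales
  define N where "N = cf_N \<alpha> \<epsilon>"
  have "0 < real q" "0 < real q'"
    using assms(7,8,11,12) by simp_all
  then have err_q: "0 < real q * \<alpha> - real p" and err_q': "0 < real p' - real q' * \<alpha>"
    using assms(15,16) by (simp_all add: field_simps)
  have "cf_q \<alpha> N = q \<and> cf_d \<alpha> N = real q * \<alpha> - real p
      \<or> cf_q \<alpha> N = q' \<and> cf_d \<alpha> N = real p' - real q' * \<alpha>"
    using cf_N_at_farey_neighbour[OF assms(1-3,7-17)] err_q err_q' by (auto simp: N_def cf_d_def)
  moreover have "cf_d \<alpha> N \<le> \<epsilon>"
    using cf_d_cf_N_le[OF assms(1)] by (simp add: N_def)
  moreover have "cf_q \<alpha> N \<le> q" if "real q * \<alpha> - real p \<le> \<epsilon>"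
    using cf_q_cf_N_le[of q "int p"] that err_q assms(7,8) by (simp add: N_def)
  moreover have "cf_q \<alpha> N \<le> q'" if "real p' - real q' * \<alpha> \<le> \<epsilon>"
    using cf_q_cf_N_le[of q' "int p'"] that err_q' assms(11,12) by (simp add: N_def abs_minus_commute)
  moreover have "\<alpha> < (real p' - \<epsilon>) / real q' \<longleftrightarrow> \<epsilon> < real p' - real q' * \<alpha>"
    and "\<alpha> \<le> (real p + \<epsilon>) / real q \<longleftrightarrow> real q * \<alpha> - real p \<le> \<epsilon>"
    using \<open>0 < real q\<close> \<open>0 < real q'\<close> by (simp_all add: field_simps)
  ultimately show ?thesis
    unfolding N_def[symmetric] not_less[symmetric] by (auto simp: min_def)
qed

end
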